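(* Let $\mathcal T=(T,\lambda)$ be a temporal oriented tree and let $G$ be its connectivity graph. For every set $S\subseteq V(T)$: $S$ is contained in the vertex set of some temporal path of $\mathcal T$ if and only if $S$ is contained in a clique of $G$.
   Context: A temporal digraph is a pair $(D,\lambda)$ with $D=(V,A)$ a finite digraph and $\lambda:A\to 2^{\{1,\dots,t_{\max}\}}$ giving the time-steps at which each arc is active. A temporal oriented tree $\mathcal T=(T,\lambda)$ is one whose underlying digraph $T$ is an orientation of a tree. A temporal path is a sequence $(v_1,v_2,t_1),\dots,(v_{k-1},v_k,t_{k-1})$ with pairwise distinct $v_i$, $\overrightarrow{v_iv_{i+1}}\in A$, $t_i\in\lambda(\overrightarrow{v_iv_{i+1}})$ and $t_1<\dots<t_{k-1}$; a single vertex is also a temporal path. Two vertices $u\ne v$ are temporally connected if there is a temporal path from $u$ to $v$ or from $v$ to $u$. The connectivity graph of $\mathcal T$ is the undirected graph $G$ with $V(G)=V(T)$ and $uv\in E(G)$ iff $u\neq v$ and $u,v$ are temporally connected. *)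

theory Defs
  imports Main
begin

definition und_adj :: "('v \<times> 'v) set \<Rightarrow> 'v \<Rightarrow> 'v \<Rightarrow> bool" where
  "und_adj A u v \<longleftrightarrow> (u, v) \<in> A \<or> (v, u) \<in> A"

definition und_cycle :: "('v \<times> 'v) set \<Rightarrow> 'v list \<Rightarrow> bool" where
  "und_cycle A cs \<longleftrightarrow> length cs \<ge> 3 \<and> distinct cs \<and>
     (\<forall>i. Suc i < length cs \<longrightarrow> und_adj A (cs ! i) (cs ! Suc i)) \<and>
     und_adj A (last cs) (hd cs)"

definition und_connected :: "'v set \<Rightarrow> ('v \<times> 'v) set \<Rightarrow> bool" where
  "und_connected V A \<longleftrightarrow>
     (\<forall>u\<in>V. \<forall>v\<in>V. (u, v) \<in> {(x, y). und_adj A x y}\<^sup>*)"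

definition oriented_tree :: "'v set \<Rightarrow> ('v \<times> 'v) set \<Rightarrow> bool" where
  "oriented_tree V A \<longleftrightarrow> finite V \<and> V \<noteq> {} \<and> A \<subseteq> V \<times> V \<and>
     (\<forall>v. (v, v) \<notin> A) \<and> (\<forall>u v. (u, v) \<in> A \<longrightarrow> (v, u) \<notin> A) \<and>
     und_connected V A \<and> (\<nexists>cs. und_cycle A cs)"

definition temporal_labelling :: "('v \<times> 'v) set \<Rightarrow> nat \<Rightarrow> ('v \<times> 'v \<Rightarrow> nat set) \<Rightarrow> bool" where
  "temporal_labelling A tmax lam \<longleftrightarrow> (\<forall>a\<in>A. lam a \<subseteq> {1..tmax})"

text \<open>A temporal path with vertex sequence vs = [v_1,...,v_k] and times
  ts = [t_1,...,t_{k-1}]: the triples (v_i, v_{i+1}, t_i).\<close>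
definition temporal_path ::
  "('v \<times> 'v) set \<Rightarrow> ('v \<times> 'v \<Rightarrow> nat set) \<Rightarrow> 'v list \<Rightarrow> nat list \<Rightarrow> bool" where
  "temporal_path A lam vs ts \<longleftrightarrow> vs \<noteq> [] \<and> distinct vs \<and>
     length ts = length vs - 1 \<and>
     (\<forall>i. Suc i < length vs \<longrightarrow>
        (vs ! i, vs ! Suc i) \<in> A \<and> ts ! i \<in> lam (vs ! i, vs ! Suc i)) \<and>
     sorted_wrt (<) ts"

definition temporal_path_from_to ::
  "('v \<times> 'v) set \<Rightarrow> ('v \<times> 'v \<Rightarrow> nat set) \<Rightarrow> 'v \<Rightarrow> 'v \<Rightarrow> bool" where
  "temporal_path_from_to A lam u v \<longleftrightarrow>
     (\<exists>vs ts. temporal_path A lam vs ts \<and> hd vs = u \<and> last vs = v)"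

definition conn_edge ::
  "('v \<times> 'v) set \<Rightarrow> ('v \<times> 'v \<Rightarrow> nat set) \<Rightarrow> 'v \<Rightarrow> 'v \<Rightarrow> bool" where
  "conn_edge A lam u v \<longleftrightarrow> u \<noteq> v \<and>
     (temporal_path_from_to A lam u v \<or> temporal_path_from_to A lam v u)"

definition is_clique :: "'v set \<Rightarrow> ('v \<Rightarrow> 'v \<Rightarrow> bool) \<Rightarrow> 'v set \<Rightarrow> bool" where
  "is_clique V E C \<longleftrightarrow> C \<subseteq> V \<and> (\<forall>u\<in>C. \<forall>v\<in>C. u \<noteq> v \<longrightarrow> E u v)"

end

theory Submission
  imports Defs
begin

(* Any two vertices of a temporal path are joined by the temporal subpath between them, so
   the vertices of a temporal path form a clique of the connectivity graph.
   Conversely, let S be a clique and P a temporal path with both ends in S containing as many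
   vertices of S as possible. A vertex w of S missed by P is temporally connected to both ends
   of P. Since paths in a tree are unique, the two connecting paths leave w along a common
   stretch ending in some d, enter P at the same vertex c, and from there follow P towards
   opposite ends. Unless one of them contains all of P, contradicting maximality, both turn
   at c, and as each is directed, the arc between d and c would have to point into c for one
   and out of c for the other. *)

lemma und_adj_sym: "und_adj A u v \<longleftrightarrow> und_adj A v u"
  by (auto simp: und_adj_def)

definition upath :: "('v \<times> 'v) set \<Rightarrow> 'v list \<Rightarrow> bool" where
  "upath A xs \<longleftrightarrow> xs \<noteq> [] \<and> distinct xs \<and> successively (und_adj A) xs"

lemma upath_rev: "upath A (rev xs) \<longleftrightarrow> upath A xs"
proof -
  have "successively (und_adj A) (rev xs) \<longleftrightarrow> successively (\<lambda>x y. und_adj A y x) xs"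
    by (simp add: successively_rev)
  then show ?thesis
    by (simp add: upath_def und_adj_sym)
qed

lemma upath_appendD:
  assumes "upath A (xs @ ys)"
  shows "xs \<noteq> [] \<Longrightarrow> upath A xs" and "ys \<noteq> [] \<Longrightarrow> upath A ys"
  using assms by (auto simp: upath_def successively_append_iff)

lemma upath_join:
  assumes "upath A (xs @ [c])" "upath A (c # ys)" "set xs \<inter> set ys = {}"
  shows "upath A (xs @ c # ys)"
  using assms by (auto simp: upath_def successively_append_iff)

lemma und_cycleI:
  assumes "upath A cs" "length cs \<ge> 3" "und_adj A (last cs) (hd cs)"
  shows "und_cycle A cs"
  using assms unfolding und_cycle_def upath_def successively_conv_nth by blast

lemma und_cycle_of_diverging_paths:
  assumes p: "upath A (a # ps @ [z])" and q: "upath A (a # qs @ [z])"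
    and disj: "set ps \<inter> set qs = {}" and diverge: "ps \<noteq> [] \<or> qs \<noteq> []"
  shows "und_cycle A (a # ps @ z # rev qs)"
proof (rule und_cycleI)
  have "upath A ((z # rev qs) @ [a])"
    using q upath_rev[of A "a # qs @ [z]"] by simp
  then have "upath A (z # rev qs)"
    by (rule upath_appendD) simp
  moreover have "a \<notin> set qs"
    using q by (simp add: upath_def)
  ultimately show "upath A (a # ps @ z # rev qs)"
    using upath_join[of A "a # ps" z "rev qs"] p disj by auto
  show "length (a # ps @ z # rev qs) \<ge> 3"
    using diverge by (auto simp: Suc_le_eq)
  have "und_adj A a (hd (qs @ [z]))"
    using q by (cases qs) (auto simp: upath_def)
  moreover have "last (z # rev qs) = hd (qs @ [z])"
    by (cases qs) auto
  ultimately show "und_adj A (last (a # ps @ z # rev qs)) (hd (a # ps @ z # rev qs))"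
    by (simp add: und_adj_sym)
qed

lemma upath_unique:
  assumes acyclic: "\<nexists>cs. und_cycle A cs"
  shows "upath A p \<Longrightarrow> upath A q \<Longrightarrow> hd p = hd q \<Longrightarrow> last p = last q \<Longrightarrow> p = q"
proof (induction p arbitrary: q)
  case Nil
  then show ?case by (simp add: upath_def)
next
  case (Cons a p)
  obtain q' where q: "q = a # q'"
    using Cons.prems by (cases q) (auto simp: upath_def)
  consider "p = []" | "q' = []" | "p \<noteq> []" "q' \<noteq> []"
    by blast
  then show ?case
  proof cases
    case 1
    then show ?thesis
      using Cons.prems q by (cases q' rule: rev_cases) (auto simp: upath_def)
  next
    case 2
    then show ?thesis
      using Cons.prems q by (cases p rule: rev_cases) (auto simp: upath_def)
  next
    case 3
    have p: "upath A p" and q': "upath A q'"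
      using Cons.prems q 3 upath_appendD(2)[of A "[a]"] by auto
    have same_last: "last p = last q'"
      using Cons.prems q 3 by simp
    show ?thesis
    proof (cases "hd p = hd q'")
      case True
      then show ?thesis
        using Cons.IH[OF p q' True same_last] q by simp
    next
      case False
      obtain ps z p2 where ps: "p = ps @ z # p2" "z \<in> set q'" "\<forall>y\<in>set ps. y \<notin> set q'"
        using split_list_first_prop[of p "\<lambda>z. z \<in> set q'"] same_last 3
        by (metis last_in_set)
      obtain qs q2 where qs: "q' = qs @ z # q2"
        using ps(2) split_list by metis
      have "upath A (a # ps @ [z])"
        using Cons.prems(1) ps(1) upath_appendD(1)[of A "a # ps @ [z]" p2] by simp
      moreover have "upath A (a # qs @ [z])"
        using Cons.prems(2) q qs upath_appendD(1)[of A "a # qs @ [z]" q2] by simp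
      moreover have "ps \<noteq> [] \<or> qs \<noteq> []"
        using False ps(1) qs by auto
      ultimately have "und_cycle A (a # ps @ z # rev qs)"
        using und_cycle_of_diverging_paths ps(3) qs by fastforce
      then show ?thesis
        using acyclic by blast
    qed
  qed
qed

lemma upath_unique_join:
  assumes "\<nexists>cs. und_cycle A cs" "upath A zs" "upath A (xs @ [c])" "upath A (c # ys)"
    and "set xs \<inter> set ys = {}" "hd zs = hd (xs @ [c])" "last zs = last (c # ys)"
  shows "zs = xs @ c # ys"
  using upath_unique[OF assms(1,2) upath_join[OF assms(3-5)]] assms(6,7)
  by (cases xs) auto

definition dipath :: "('v \<times> 'v) set \<Rightarrow> 'v list \<Rightarrow> bool" where
  "dipath A xs \<longleftrightarrow> xs \<noteq> [] \<and> distinct xs \<and> successively (\<lambda>u v. (u, v) \<in> A) xs"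

definition oriented_path :: "('v \<times> 'v) set \<Rightarrow> 'v list \<Rightarrow> bool" where
  "oriented_path A xs \<longleftrightarrow> dipath A xs \<or> dipath A (rev xs)"

lemma dipath_imp_upath: "dipath A xs \<Longrightarrow> upath A xs"
  unfolding dipath_def upath_def by (auto elim: successively_mono simp: und_adj_def)

lemma oriented_path_imp_upath: "oriented_path A xs \<Longrightarrow> upath A xs"
  unfolding oriented_path_def using dipath_imp_upath upath_rev by blast

lemma oriented_path_rev: "oriented_path A (rev xs) \<longleftrightarrow> oriented_path A xs"
  unfolding oriented_path_def by auto

lemma oriented_path_inner_vertex:
  assumes antisym: "\<forall>u v. (u, v) \<in> A \<longrightarrow> (v, u) \<notin> A"
    and "oriented_path A (us @ x # c # y # vs)"
  shows "(x, c) \<in> A \<longleftrightarrow> (c, y) \<in> A"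
  using assms(2) unfolding oriented_path_def
proof
  assume "dipath A (us @ x # c # y # vs)"
  then show ?thesis
    by (simp add: dipath_def successively_append_iff)
next
  assume "dipath A (rev (us @ x # c # y # vs))"
  then have "(y, c) \<in> A" "(c, x) \<in> A"
    by (simp_all add: dipath_def successively_append_iff)
  then show ?thesis
    using antisym by blast
qed

lemma oriented_paths_to_ends_cover:
  assumes acyclic: "\<nexists>cs. und_cycle A cs" and antisym: "\<forall>u v. (u, v) \<in> A \<longrightarrow> (v, u) \<notin> A"
    and P: "dipath A P" and w: "w \<notin> set P"
    and Q: "oriented_path A Q" "hd Q = w" "last Q = hd P"
    and R: "oriented_path A R" "hd R = w" "last R = last P"
  shows "set P \<subseteq> set Q \<or> set P \<subseteq> set R"
proof (rule ccontr)
  assume uncovered: "\<not> ?thesis"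
  have "P \<noteq> []" "Q \<noteq> []"
    using P Q(1) oriented_path_imp_upath by (auto simp: dipath_def upath_def)
  then obtain qs c q2 where Q_split: "Q = qs @ c # q2" "c \<in> set P" "\<forall>y\<in>set qs. y \<notin> set P"
    using split_list_first_prop[of Q "\<lambda>z. z \<in> set P"] Q(3) by (metis hd_in_set last_in_set)
  obtain p1 p2 where P_split: "P = p1 @ c # p2"
    using Q_split(2) split_list by metis
  obtain q0 d where qs: "qs = q0 @ [d]"
    using Q_split w Q(2) by (cases qs rule: rev_cases) auto
  have hd_qs: "hd (qs @ xs) = w" for xs
    using Q(2) Q_split(1) qs by (cases q0) simp_all
  have up_qs: "upath A (qs @ [c])"
    using oriented_path_imp_upath[OF Q(1)] Q_split(1) upath_appendD(1)[of A "qs @ [c]" q2]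
    by simp
  have up_P: "upath A (c # rev p1)" "upath A (c # p2)"
    using P P_split dipath_imp_upath upath_appendD(2)[of A p1 "c # p2"]
      upath_appendD(1)[of A "p1 @ [c]" p2] upath_rev[of A "p1 @ [c]"] by auto
  have "last (c # rev p1) = hd P"
    using P_split by (cases p1) auto
  then have Q_eq: "Q = qs @ c # rev p1"
    using upath_unique_join[OF acyclic oriented_path_imp_upath[OF Q(1)] up_qs up_P(1)]
      Q(2,3) Q_split(3) P_split hd_qs by auto
  have R_eq: "R = qs @ c # p2"
    using upath_unique_join[OF acyclic oriented_path_imp_upath[OF R(1)] up_qs up_P(2)]
      R(2,3) Q_split(3) P_split hd_qs by auto
  obtain p0 x y p3 where p1: "p1 = p0 @ [x]" and p2: "p2 = y # p3"
    using uncovered P_split Q_eq R_eq by (cases p1 rule: rev_cases; cases p2) auto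
  have P_inner: "P = p0 @ x # c # y # p3"
    using P_split p1 p2 by simp
  have "(x, c) \<in> A" "(c, y) \<in> A"
    using P unfolding P_inner dipath_def by (simp_all add: successively_append_iff)
  moreover have "(d, c) \<in> A \<longleftrightarrow> (c, x) \<in> A"
    using oriented_path_inner_vertex[OF antisym, of q0 d c x "rev p0"] Q(1) Q_eq qs p1 by simp
  moreover have "(d, c) \<in> A \<longleftrightarrow> (c, y) \<in> A"
    using oriented_path_inner_vertex[OF antisym, of q0 d c y p3] R(1) R_eq qs p2 by simp
  ultimately show False
    using antisym by blast
qed

lemma temporal_path_dipath: "temporal_path A lam vs ts \<Longrightarrow> dipath A vs"
  unfolding temporal_path_def dipath_def successively_conv_nth by auto

lemma temporal_path_slice:
  assumes "temporal_path A lam vs ts" "i \<le> j" "j < length vs"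
  shows "temporal_path A lam (drop i (take (Suc j) vs)) (drop i (take j ts))"
  using assms unfolding temporal_path_def
  by (auto simp: sorted_wrt_take sorted_wrt_drop distinct_drop distinct_take)

lemma temporal_path_from_to_nth:
  assumes "temporal_path A lam vs ts" "i \<le> j" "j < length vs"
  shows "temporal_path_from_to A lam (vs ! i) (vs ! j)"
proof -
  have "drop i (take (Suc j) vs) = drop i (take j vs) @ [vs ! j]"
    using assms(2,3) by (simp add: take_Suc_conv_app_nth)
  moreover have "hd (drop i (take (Suc j) vs)) = vs ! i"
    using assms(2,3) by (simp add: hd_drop_conv_nth)
  ultimately show ?thesis
    using temporal_path_slice[OF assms] unfolding temporal_path_from_to_def by (metis last_snoc)
qed

lemma conn_edge_on_temporal_path:
  assumes "temporal_path A lam vs ts" "u \<in> set vs" "v \<in> set vs" "u \<noteq> v"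
  shows "conn_edge A lam u v"
proof -
  obtain i j where "i < length vs" "vs ! i = u" "j < length vs" "vs ! j = v"
    using assms(2,3) by (metis in_set_conv_nth)
  then show ?thesis
    using temporal_path_from_to_nth[OF assms(1)] assms(4) unfolding conn_edge_def
    by (metis nle_le)
qed

lemma conn_edge_oriented_path:
  assumes "conn_edge A lam w x"
  obtains Q ts U where "temporal_path A lam Q ts" "{hd Q, last Q} = {w, x}"
    "oriented_path A U" "hd U = w" "last U = x" "set U = set Q"
proof -
  obtain Q ts where Q: "temporal_path A lam Q ts"
    and ends: "hd Q = w \<and> last Q = x \<or> hd Q = x \<and> last Q = w"
    using assms unfolding conn_edge_def temporal_path_from_to_def by blast
  have "oriented_path A Q" "Q \<noteq> []"
    using temporal_path_dipath[OF Q] by (auto simp: oriented_path_def dipath_def)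
  with ends show ?thesis
  proof (elim disjE conjE)
    assume "hd Q = w" "last Q = x"
    then show ?thesis
      using that[OF Q] \<open>oriented_path A Q\<close> by blast
  next
    assume "hd Q = x" "last Q = w"
    then show ?thesis
      using that[OF Q, of "rev Q"] \<open>oriented_path A Q\<close> \<open>Q \<noteq> []\<close>
      by (simp add: oriented_path_rev hd_rev last_rev insert_commute)
  qed
qed

lemma temporal_path_extend:
  assumes acyclic: "\<nexists>cs. und_cycle A cs" and antisym: "\<forall>u v. (u, v) \<in> A \<longrightarrow> (v, u) \<notin> A"
    and P: "temporal_path A lam P tsP" and w: "w \<notin> set P"
    and "conn_edge A lam w (hd P)" "conn_edge A lam w (last P)"
  shows "\<exists>Q tsQ. temporal_path A lam Q tsQ \<and> insert w (set P) \<subseteq> set Q \<and>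
    {hd Q, last Q} \<subseteq> {w, hd P, last P}"
proof -
  obtain Q tsQ U where Q: "temporal_path A lam Q tsQ" "{hd Q, last Q} = {w, hd P}"
    and U: "oriented_path A U" "hd U = w" "last U = hd P" "set U = set Q"
    using conn_edge_oriented_path[OF assms(5)] by blast
  obtain R tsR V where R: "temporal_path A lam R tsR" "{hd R, last R} = {w, last P}"
    and V: "oriented_path A V" "hd V = w" "last V = last P" "set V = set R"
    using conn_edge_oriented_path[OF assms(6)] by blast
  have "w \<in> set U" "w \<in> set V"
    using oriented_path_imp_upath[OF U(1)] oriented_path_imp_upath[OF V(1)] U(2) V(2)
    by (metis hd_in_set upath_def)+
  moreover have "set P \<subseteq> set U \<or> set P \<subseteq> set V"
    using oriented_paths_to_ends_cover[OF acyclic antisym temporal_path_dipath[OF P] w]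
      U(1-3) V(1-3) by blast
  ultimately have "insert w (set P) \<subseteq> set Q \<or> insert w (set P) \<subseteq> set R"
    using U(4) V(4) by auto
  then show ?thesis
  proof
    assume "insert w (set P) \<subseteq> set Q"
    then show ?thesis
      using Q by (intro exI[of _ Q] exI[of _ tsQ]) auto
  next
    assume "insert w (set P) \<subseteq> set R"
    then show ?thesis
      using R by (intro exI[of _ R] exI[of _ tsR]) auto
  qed
qed

lemma temporal_path_through_clique:
  assumes acyclic: "\<nexists>cs. und_cycle A cs" and antisym: "\<forall>u v. (u, v) \<in> A \<longrightarrow> (v, u) \<notin> A"
    and "finite S" and clique: "\<forall>u\<in>S. \<forall>v\<in>S. u \<noteq> v \<longrightarrow> conn_edge A lam u v"
  shows "\<exists>vs ts. temporal_path A lam vs ts \<and> S \<subseteq> set vs"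
proof (cases "S = {}")
  case True
  have "temporal_path A lam [undefined] []"
    by (simp add: temporal_path_def)
  with True show ?thesis
    by blast
next
  case False
  then obtain s where "s \<in> S"
    by blast
  define covered where "covered n \<longleftrightarrow> (\<exists>vs ts. temporal_path A lam vs ts \<and>
    hd vs \<in> S \<and> last vs \<in> S \<and> n = card (S \<inter> set vs))" for n
  have "covered (card (S \<inter> {s}))"
    unfolding covered_def using \<open>s \<in> S\<close>
    by (intro exI[of _ "[s]"] exI[of _ "[]"]) (simp add: temporal_path_def)
  moreover have "\<forall>n. covered n \<longrightarrow> n \<le> card S"
    unfolding covered_def using \<open>finite S\<close> by (auto simp: card_mono)
  ultimately have "\<exists>m. covered m \<and> (\<forall>n. covered n \<longrightarrow> n \<le> m)"
    by (rule Nat.ex_has_greatest_nat)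
  then obtain m where "covered m" and max: "\<And>n. covered n \<Longrightarrow> n \<le> m"
    by blast
  then obtain P tsP where P: "temporal_path A lam P tsP" "hd P \<in> S" "last P \<in> S"
    and m: "m = card (S \<inter> set P)"
    unfolding covered_def by blast
  show ?thesis
  proof (rule ccontr)
    assume "\<not> ?thesis"
    then obtain w where w: "w \<in> S" "w \<notin> set P"
      using P(1) by blast
    have "P \<noteq> []"
      using P(1) by (simp add: temporal_path_def)
    then have "w \<noteq> hd P" "w \<noteq> last P"
      using w(2) hd_in_set last_in_set by metis+
    then have edges: "conn_edge A lam w (hd P)" "conn_edge A lam w (last P)"
      using clique w(1) P(2,3) by blast+
    obtain Q tsQ where Q: "temporal_path A lam Q tsQ" "insert w (set P) \<subseteq> set Q"
      "{hd Q, last Q} \<subseteq> {w, hd P, last P}"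
      using temporal_path_extend[OF acyclic antisym P(1) w(2) edges]
      by (elim exE conjE) (rule that)
    have "hd Q \<in> S" "last Q \<in> S"
      using Q(3) w(1) P(2,3) by auto
    then have "covered (card (S \<inter> set Q))"
      unfolding covered_def using Q(1) by (intro exI[of _ Q] exI[of _ tsQ]) simp
    moreover have "card (S \<inter> set P) < card (S \<inter> set Q)"
      using Q(2) w \<open>finite S\<close> by (intro psubset_card_mono) auto
    ultimately show False
      using max m by (metis not_le)
  qed
qed

theorem mainTheorem4:
  fixes V :: "'v set" and A :: "('v \<times> 'v) set" and tmax :: nat
    and lam :: "'v \<times> 'v \<Rightarrow> nat set" and S :: "'v set"
  assumes "oriented_tree V A"
    and "temporal_labelling A tmax lam"
    and "S \<subseteq> V"
  shows "(\<exists>vs ts. temporal_path A lam vs ts \<and> S \<subseteq> set vs) \<longleftrightarrow>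
         (\<exists>C. is_clique V (conn_edge A lam) C \<and> S \<subseteq> C)"
proof
  assume "\<exists>vs ts. temporal_path A lam vs ts \<and> S \<subseteq> set vs"
  then obtain vs ts where path: "temporal_path A lam vs ts" and "S \<subseteq> set vs"
    by blast
  then have "is_clique V (conn_edge A lam) S"
    using assms(3) conn_edge_on_temporal_path[OF path] unfolding is_clique_def
    by (auto simp: subset_iff)
  then show "\<exists>C. is_clique V (conn_edge A lam) C \<and> S \<subseteq> C"
    by blast
next
  assume "\<exists>C. is_clique V (conn_edge A lam) C \<and> S \<subseteq> C"
  then have clique: "\<forall>u\<in>S. \<forall>v\<in>S. u \<noteq> v \<longrightarrow> conn_edge A lam u v"
    unfolding is_clique_def by blast
  have "finite V" and acyclic: "\<nexists>cs. und_cycle A cs"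
    and antisym: "\<forall>u v. (u, v) \<in> A \<longrightarrow> (v, u) \<notin> A"
    using assms(1) unfolding oriented_tree_def by auto
  then show "\<exists>vs ts. temporal_path A lam vs ts \<and> S \<subseteq> set vs"
    using temporal_path_through_clique[OF acyclic antisym _ clique] finite_subset[OF assms(3)]
    by blast
qed

end
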